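(* Let $N=\{1,\dots,n\}$, let $U$ be a finite set, $S_1,\dots,S_n\subseteq U$, $w:U\to\mathbb{R}$, $c\in\mathbb{R}$, and let $s:2^N\to\mathbb{R}$ be defined by $s_A=c+\mathbf{w}(\bigcup_{i\in A}S_i)$, where $\mathbf{w}(S)=\sum_{u\in S}w(u)$. Define the type-3 discrete set Fourier transform of $s$ by $\widehat{s}^{(3)}_B=\sum_{A\subseteq B}(-1)^{|A|}s_A$ for $B\subseteq N$. Then $$\widehat{s}^{(3)}_B=\begin{cases}-\mathbf{w}\big(\bigcap_{i\in B}S_i\big), & B\neq\emptyset,\\ s_\emptyset, & B=\emptyset.\end{cases}$$ *)

theory Defs
  imports Complex_Main
begin

definition wt :: "('u \<Rightarrow> real) \<Rightarrow> 'u set \<Rightarrow> real" where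
  "wt w S = (\<Sum>u\<in>S. w u)"

definition cover_fun :: "real \<Rightarrow> ('u \<Rightarrow> real) \<Rightarrow> (nat \<Rightarrow> 'u set) \<Rightarrow> nat set \<Rightarrow> real" where
  "cover_fun c w S A = c + wt w (\<Union>i\<in>A. S i)"

definition fourier3 :: "(nat set \<Rightarrow> real) \<Rightarrow> nat set \<Rightarrow> real" where
  "fourier3 s B = (\<Sum>A\<in>Pow B. (-1) ^ card A * s A)"

end

theory Submission
  imports Defs "HOL-Library.Indicator_Function"
begin

text \<open>
  Both sides are linear in the weights, so it suffices to treat the indicator of a single
  point \<open>u\<close>. The point \<open>u\<close> misses \<open>\<Union>i\<in>A. S i\<close> exactly when \<open>A\<close> lies inside
  \<open>T = {i \<in> B. u \<notin> S i}\<close>, and the alternating sum of \<open>(-1)^|A|\<close> over the subsets of a finite set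
  vanishes unless the set is empty. Hence the transform of the indicator of the union
  at \<open>B \<noteq> {}\<close> is \<open>-[T = {}] = -[u \<in> \<Inter>i\<in>B. S i]\<close>, while a constant contributes only at \<open>B = {}\<close>.
\<close>

lemma sum_Pow_neg_one_power:
  assumes "finite T"
  shows "(\<Sum>A\<in>Pow T. (-1::'a::comm_ring_1) ^ card A) = (if T = {} then 1 else 0)"
proof -
  have "(\<Prod>x\<in>T. (1::'a) - 1) = (\<Sum>A\<in>Pow T. (-1) ^ card A * (\<Prod>x\<in>A. 1) * (\<Prod>x\<in>T - A. 1))"
    by (rule prod_diff_conv_sum[OF assms])
  then show ?thesis
    using assms by (auto simp: power_0_left card_eq_0_iff)
qed

lemma fourier3_cong:
  assumes "\<And>A. A \<subseteq> B \<Longrightarrow> s A = s' A"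
  shows "fourier3 s B = fourier3 s' B"
  unfolding fourier3_def using assms by (intro sum.cong) auto

lemma fourier3_add: "fourier3 (\<lambda>A. s A + t A) B = fourier3 s B + fourier3 t B"
  by (simp add: fourier3_def distrib_left sum.distrib)

lemma fourier3_cmult: "fourier3 (\<lambda>A. a * s A) B = a * fourier3 s B"
  by (simp add: fourier3_def sum_distrib_left mult.left_commute)

lemma fourier3_sum: "fourier3 (\<lambda>A. \<Sum>u\<in>U. f u A) B = (\<Sum>u\<in>U. fourier3 (f u) B)"
  by (simp add: fourier3_def sum_distrib_left sum.swap[of _ U])

lemma fourier3_const: "fourier3 (\<lambda>A. c) B = (if B = {} then c else 0)"
proof (cases "finite B")
  case True
  then show ?thesis
    using sum_Pow_neg_one_power[OF True, where 'a=real]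
    by (simp add: fourier3_def flip: sum_distrib_right)
next
  case False
  then show ?thesis
    by (auto simp: fourier3_def)
qed

lemma fourier3_indicator_UN:
  assumes "finite B"
  shows "fourier3 (\<lambda>A. indicator (\<Union>i\<in>A. S i) u) B
           = (if B = {} then 1 else 0) - indicator (\<Inter>i\<in>B. S i) u"
proof -
  define T where "T = {i \<in> B. u \<notin> S i}"
  have "finite T"
    using assms by (simp add: T_def)
  have "fourier3 (\<lambda>A. indicator (\<Union>i\<in>A. S i) u) B
          = (\<Sum>A\<in>Pow B. (-1) ^ card A - (if A \<subseteq> T then (-1) ^ card A else 0))"
    unfolding fourier3_def by (rule sum.cong) (auto simp: T_def indicator_def)
  also have "\<dots> = fourier3 (\<lambda>A. 1) B - (\<Sum>A\<in>Pow B. if A \<subseteq> T then (-1) ^ card A else 0)"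
    by (simp add: fourier3_def sum_subtractf)
  also have "(\<Sum>A\<in>Pow B. if A \<subseteq> T then (-1) ^ card A else 0) = (\<Sum>A\<in>Pow T. (-1::real) ^ card A)"
    using assms by (intro sum.mono_neutral_cong_right) (auto simp: T_def)
  also have "(\<Sum>A\<in>Pow T. (-1::real) ^ card A) = indicator (\<Inter>i\<in>B. S i) u"
    unfolding sum_Pow_neg_one_power[OF \<open>finite T\<close>] by (auto simp: T_def indicator_def)
  finally show ?thesis
    by (simp add: fourier3_const)
qed

lemma wt_eq_sum_indicator:
  assumes "finite U" and "X \<subseteq> U"
  shows "wt w X = (\<Sum>u\<in>U. w u * indicator X u)"
  using assms by (simp add: wt_def Int_absorb1)

theorem theorem2:
  fixes n :: nat and U :: "'u set" and S :: "nat \<Rightarrow> 'u set"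
    and w :: "'u \<Rightarrow> real" and c :: real and B :: "nat set"
  assumes "finite U"
    and "\<And>i. i \<in> {1..n} \<Longrightarrow> S i \<subseteq> U"
    and "B \<subseteq> {1..n}"
  shows "fourier3 (cover_fun c w S) B =
           (if B \<noteq> {} then - wt w (\<Inter>i\<in>B. S i) else cover_fun c w S {})"
proof (cases "B = {}")
  case True
  then show ?thesis
    by (simp add: fourier3_def)
next
  case False
  have "finite B"
    using assms(3) finite_subset by blast
  have "fourier3 (cover_fun c w S) B
          = fourier3 (\<lambda>A. c + (\<Sum>u\<in>U. w u * indicator (\<Union>i\<in>A. S i) u)) B"
  proof (rule fourier3_cong)
    fix A
    assume "A \<subseteq> B"
    then have "(\<Union>i\<in>A. S i) \<subseteq> U"
      using assms(2,3) by blast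
    then show "cover_fun c w S A = c + (\<Sum>u\<in>U. w u * indicator (\<Union>i\<in>A. S i) u)"
      by (simp only: cover_fun_def wt_eq_sum_indicator[OF assms(1)])
  qed
  also have "\<dots> = - (\<Sum>u\<in>U. w u * indicator (\<Inter>i\<in>B. S i) u)"
    using False \<open>finite B\<close>
    by (simp add: fourier3_add fourier3_const fourier3_sum fourier3_cmult fourier3_indicator_UN
        sum_negf)
  also have "\<dots> = - wt w (\<Inter>i\<in>B. S i)"
  proof -
    have "(\<Inter>i\<in>B. S i) \<subseteq> U"
      using False assms(2,3) by blast
    then show ?thesis
      by (simp only: wt_eq_sum_indicator[OF assms(1)])
  qed
  finally show ?thesis
    using False by simp
qed

end
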